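(* Every 2-local derivation of a finite dimensional formally real exceptional simple Jordan algebra $\mathcal{A}$ is a derivation.
   Context: A real Jordan algebra is formally real if $\sum_i a_i^2=0$ (finite sum) implies each $a_i=0$. Exceptional means not special, i.e. not isomorphic to a Jordan subalgebra of $R^+$ (with product $\frac12(ab+ba)$) for an associative algebra $R$. A derivation is a linear map $D$ with $D(xy)=D(x)y+xD(y)$. A 2-local derivation is a map $\Delta$ (not assumed linear) such that for every $x,y$ there is a derivation $D_{x,y}$ with $\Delta(x)=D_{x,y}(x)$, $\Delta(y)=D_{x,y}(y)$. *)

theory Defs
  imports Complex_Main
begin

definition jordan_algebra :: "('a::real_vector \<Rightarrow> 'a \<Rightarrow> 'a) \<Rightarrow> bool" where
  "jordan_algebra mult \<longleftrightarrow>
     (\<forall>x y z. mult (x + y) z = mult x z + mult y z) \<and>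
     (\<forall>c x y. mult (c *\<^sub>R x) y = c *\<^sub>R mult x y) \<and>
     (\<forall>x y. mult x y = mult y x) \<and>
     (\<forall>x y. mult (mult x y) (mult x x) = mult x (mult y (mult x x)))"

definition finite_dim_space :: "'a::real_vector itself \<Rightarrow> bool" where
  "finite_dim_space _ \<longleftrightarrow> (\<exists>B::'a set. finite B \<and> span B = UNIV)"

definition formally_real :: "('a::real_vector \<Rightarrow> 'a \<Rightarrow> 'a) \<Rightarrow> bool" where
  "formally_real mult \<longleftrightarrow>
     (\<forall>(n::nat) (a::nat \<Rightarrow> 'a). (\<Sum>i<n. mult (a i) (a i)) = 0 \<longrightarrow> (\<forall>i<n. a i = 0))"

definition jordan_ideal :: "('a::real_vector \<Rightarrow> 'a \<Rightarrow> 'a) \<Rightarrow> 'a set \<Rightarrow> bool" where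
  "jordan_ideal mult I \<longleftrightarrow> subspace I \<and> (\<forall>x y. y \<in> I \<longrightarrow> mult x y \<in> I)"

definition simple_jordan :: "('a::real_vector \<Rightarrow> 'a \<Rightarrow> 'a) \<Rightarrow> bool" where
  "simple_jordan mult \<longleftrightarrow>
     (\<exists>x y. mult x y \<noteq> 0) \<and>
     (\<forall>I. jordan_ideal mult I \<longrightarrow> I = {0} \<or> I = UNIV)"

definition assoc_real_algebra ::
  "'r set \<Rightarrow> ('r \<Rightarrow> 'r \<Rightarrow> 'r) \<Rightarrow> (real \<Rightarrow> 'r \<Rightarrow> 'r) \<Rightarrow> ('r \<Rightarrow> 'r \<Rightarrow> 'r) \<Rightarrow> 'r \<Rightarrow> bool" where
  "assoc_real_algebra S add sc mul z \<longleftrightarrow>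
     z \<in> S \<and>
     (\<forall>x\<in>S. \<forall>y\<in>S. add x y \<in> S \<and> mul x y \<in> S) \<and>
     (\<forall>c. \<forall>x\<in>S. sc c x \<in> S) \<and>
     (\<forall>x\<in>S. \<forall>y\<in>S. \<forall>w\<in>S. add (add x y) w = add x (add y w)) \<and>
     (\<forall>x\<in>S. \<forall>y\<in>S. add x y = add y x) \<and>
     (\<forall>x\<in>S. add z x = x) \<and>
     (\<forall>x\<in>S. \<exists>y\<in>S. add x y = z) \<and>
     (\<forall>c. \<forall>x\<in>S. \<forall>y\<in>S. sc c (add x y) = add (sc c x) (sc c y)) \<and>
     (\<forall>c d. \<forall>x\<in>S. sc (c + d) x = add (sc c x) (sc d x)) \<and>
     (\<forall>c d. \<forall>x\<in>S. sc c (sc d x) = sc (c * d) x) \<and>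
     (\<forall>x\<in>S. sc 1 x = x) \<and>
     (\<forall>x\<in>S. \<forall>y\<in>S. \<forall>w\<in>S. mul (add x y) w = add (mul x w) (mul y w)) \<and>
     (\<forall>x\<in>S. \<forall>y\<in>S. \<forall>w\<in>S. mul w (add x y) = add (mul w x) (mul w y)) \<and>
     (\<forall>c. \<forall>x\<in>S. \<forall>y\<in>S. mul (sc c x) y = sc c (mul x y) \<and> mul x (sc c y) = sc c (mul x y)) \<and>
     (\<forall>x\<in>S. \<forall>y\<in>S. \<forall>w\<in>S. mul (mul x y) w = mul x (mul y w))"

text \<open>Special: isomorphic (via an injective linear Jordan homomorphism) to a Jordan
subalgebra of R^+ for an associative real algebra R.  The elements of R are taken
from the type nat => real (of the cardinality of the continuum); this loses no
generality for finite-dimensional A, since A embeds into R iff it embeds into the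
subalgebra of R generated by its image, which has countable dimension and hence
cardinality at most that of the continuum.\<close>

definition special_jordan :: "('a::real_vector \<Rightarrow> 'a \<Rightarrow> 'a) \<Rightarrow> bool" where
  "special_jordan mult \<longleftrightarrow>
     (\<exists>(S::(nat \<Rightarrow> real) set) add sc mul z (\<phi>::'a \<Rightarrow> (nat \<Rightarrow> real)).
        assoc_real_algebra S add sc mul z \<and>
        (\<forall>x. \<phi> x \<in> S) \<and> inj \<phi> \<and>
        (\<forall>x y. \<phi> (x + y) = add (\<phi> x) (\<phi> y)) \<and>
        (\<forall>c x. \<phi> (c *\<^sub>R x) = sc c (\<phi> x)) \<and>
        (\<forall>x y. \<phi> (mult x y) = sc (1/2) (add (mul (\<phi> x) (\<phi> y)) (mul (\<phi> y) (\<phi> x)))))"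

definition exceptional_jordan :: "('a::real_vector \<Rightarrow> 'a \<Rightarrow> 'a) \<Rightarrow> bool" where
  "exceptional_jordan mult \<longleftrightarrow> \<not> special_jordan mult"

definition jordan_derivation :: "('a::real_vector \<Rightarrow> 'a \<Rightarrow> 'a) \<Rightarrow> ('a \<Rightarrow> 'a) \<Rightarrow> bool" where
  "jordan_derivation mult D \<longleftrightarrow>
     linear D \<and> (\<forall>x y. D (mult x y) = mult (D x) y + mult x (D y))"

definition two_local_derivation :: "('a::real_vector \<Rightarrow> 'a \<Rightarrow> 'a) \<Rightarrow> ('a \<Rightarrow> 'a) \<Rightarrow> bool" where
  "two_local_derivation mult \<Delta> \<longleftrightarrow>
     (\<forall>x y. \<exists>D. jordan_derivation mult D \<and> \<Delta> x = D x \<and> \<Delta> y = D y)"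

end

theory Submission
  imports Defs "HOL-Computational_Algebra.Polynomial_Factorial" "HOL-Computational_Algebra.Field_as_Ring"
begin

text \<open>The trace form tr L (a b) is associative: (a b) c - a (b c) is the value at b of the inner
  derivation [L c, L a], and tr L (D w) = tr [D, L w] = 0 for every derivation D. Hence its radical
  is an ideal. Annihilating polynomials and Bezout produce a nonzero idempotent e in any
  finite-dimensional Jordan algebra without nonzero square-zero elements, and the Peirce
  decomposition gives tr L e > 0; so by simplicity the radical is zero. A 2-local derivation
  \<Delta> agrees with a single derivation on a and y, hence tr L (\<Delta> a y) = - tr L (a \<Delta> y);
  nondegeneracy turns this into linearity of \<Delta>, and \<Delta> (a a) = \<Delta> a a + a \<Delta> a
  polarizes to the Leibniz rule.\<close>

section \<open>Traces of endomorphisms\<close>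

definition finite_basis :: "'a::real_vector set \<Rightarrow> bool" where
  "finite_basis B \<longleftrightarrow> finite B \<and> independent B \<and> span B = UNIV"

lemma finite_dim_space_obtain_basis:
  assumes "finite_dim_space TYPE('a)"
  obtains B :: "'a::real_vector set" where "finite_basis B"
proof -
  obtain B0 :: "'a set" where B0: "finite B0" "span B0 = UNIV"
    using assms unfolding finite_dim_space_def by blast
  obtain B where B: "B \<subseteq> B0" "independent B" "B0 \<subseteq> span B"
    using real_vector.maximal_independent_subset[of B0] by blast
  have "span B = UNIV"
    using B0(2) real_vector.span_minimal[OF B(3) real_vector.subspace_span] by auto
  then show ?thesis
    using B B0(1) finite_subset that unfolding finite_basis_def by blast
qed

lemma linear_representation: "finite_basis B \<Longrightarrow> linear (\<lambda>v. representation B v b)"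
  unfolding finite_basis_def
  by (intro linearI) (simp_all add: real_vector.representation_add real_vector.representation_scale)

lemma sum_representation: "finite_basis B \<Longrightarrow> (\<Sum>b\<in>B. representation B v b *\<^sub>R b) = v"
  unfolding finite_basis_def by (auto intro: real_vector.sum_representation_eq)

lemma scaleR_3: "(3::real) *\<^sub>R (x::'a::real_vector) = x + 2 *\<^sub>R x"
  using scaleR_add_left[of 1 2 x] by simp

definition basis_trace :: "'a::real_vector set \<Rightarrow> ('a \<Rightarrow> 'a) \<Rightarrow> real" where
  "basis_trace B T = (\<Sum>b\<in>B. representation B (T b) b)"

lemma basis_trace_add: "finite_basis B \<Longrightarrow> basis_trace B (\<lambda>v. S v + T v) = basis_trace B S + basis_trace B T"
  unfolding basis_trace_def by (simp add: linear_add[OF linear_representation] sum.distrib)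

lemma basis_trace_scaleR: "finite_basis B \<Longrightarrow> basis_trace B (\<lambda>v. c *\<^sub>R T v) = c * basis_trace B T"
  unfolding basis_trace_def by (simp add: linear_scale[OF linear_representation] sum_distrib_left)

lemma basis_trace_diff: "finite_basis B \<Longrightarrow> basis_trace B (\<lambda>v. S v - T v) = basis_trace B S - basis_trace B T"
  unfolding basis_trace_def by (simp add: linear_diff[OF linear_representation] sum_subtractf)

lemma basis_trace_finite_rank:
  assumes B: "finite_basis B" and U: "finite U" and lin: "\<And>u. u \<in> U \<Longrightarrow> linear (\<phi> u)"
    and T: "\<And>v. T v = (\<Sum>u\<in>U. \<phi> u v *\<^sub>R g u)"
  shows "basis_trace B T = (\<Sum>u\<in>U. \<phi> u (g u))"
proof -
  note rep = linear_representation[OF B]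
  have "basis_trace B T = (\<Sum>b\<in>B. \<Sum>u\<in>U. \<phi> u b * representation B (g u) b)"
    unfolding basis_trace_def T by (simp add: linear_sum[OF rep] linear_scale[OF rep])
  also have "\<dots> = (\<Sum>u\<in>U. \<Sum>b\<in>B. representation B (g u) b * \<phi> u b)"
    by (subst sum.swap) (simp add: mult.commute)
  also have "\<dots> = (\<Sum>u\<in>U. \<phi> u (\<Sum>b\<in>B. representation B (g u) b *\<^sub>R b))"
    by (rule sum.cong[OF refl]) (simp add: linear_sum[OF lin] linear_scale[OF lin])
  also have "\<dots> = (\<Sum>u\<in>U. \<phi> u (g u))"
    by (simp add: sum_representation[OF B])
  finally show ?thesis .
qed

lemma basis_trace_commute:
  assumes B: "finite_basis B" and S: "linear S" and T: "linear T"
  shows "basis_trace B (\<lambda>v. S (T v)) = basis_trace B (\<lambda>v. T (S v))"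
proof -
  have "S (T v) = (\<Sum>b\<in>B. representation B (T v) b *\<^sub>R S b)" for v
    by (subst sum_representation[OF B, of "T v", symmetric])
       (simp add: linear_sum[OF S] linear_scale[OF S])
  moreover have "linear (\<lambda>v. representation B (T v) b)" for b
    using linear_compose[OF T linear_representation[OF B, of b]] by (simp add: o_def)
  ultimately have "basis_trace B (\<lambda>v. S (T v)) = (\<Sum>b\<in>B. representation B (T (S b)) b)"
    using B unfolding finite_basis_def by (intro basis_trace_finite_rank[OF B]) auto
  then show ?thesis
    unfolding basis_trace_def .
qed

lemma basis_trace_idempotent:
  assumes B: "finite_basis B" and P: "linear P" and idem: "\<And>v. P (P v) = P v"
  shows "basis_trace B P = real (dim (range P))"
proof -
  obtain U where U: "U \<subseteq> range P" "independent U" "range P \<subseteq> span U" "card U = dim (range P)"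
    using real_vector.basis_exists[of "range P"] by blast
  have finU: "finite U"
    using B real_vector.independent_span_bound[of B U] U(2) unfolding finite_basis_def by auto
  have in_span: "P v \<in> span U" for v
    using U(3) by auto
  have "basis_trace B P = (\<Sum>u\<in>U. representation U (P u) u)"
  proof (rule basis_trace_finite_rank[OF B finU, where \<phi> = "\<lambda>u v. representation U (P v) u" and g = "\<lambda>u. u"])
    show "linear (\<lambda>v. representation U (P v) u)" for u
      by (rule linearI)
        (simp_all add: linear_add[OF P] linear_scale[OF P] in_span U(2)
           real_vector.representation_add real_vector.representation_scale)
    show "P v = (\<Sum>u\<in>U. representation U (P v) u *\<^sub>R u)" for v
      using real_vector.sum_representation_eq[OF U(2) in_span finU] by simp
  qed
  also have "\<dots> = (\<Sum>u\<in>U. 1)"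
  proof (rule sum.cong[OF refl])
    fix u assume u: "u \<in> U"
    then have "P u = u"
      using U(1) idem by auto
    then show "representation U (P u) u = 1"
      using real_vector.representation_basis[OF U(2) u] by simp
  qed
  finally show ?thesis
    using U(4) by simp
qed

lemma dim_range_pos:
  fixes P :: "'b \<Rightarrow> 'a::real_vector" and B :: "'a set"
  assumes B: "finite_basis B" and w: "P w \<noteq> 0"
  shows "0 < dim (range P)"
proof -
  obtain U where U: "independent U" "range P \<subseteq> span U" "card U = dim (range P)"
    using real_vector.basis_exists[of "range P"] by blast
  have "finite U"
    using B real_vector.independent_span_bound[of B U] U(1) unfolding finite_basis_def by auto
  moreover have "P w \<in> span U"
    using U(2) by auto
  then have "U \<noteq> {}"
    using w by auto
  ultimately show ?thesis
    using U(3) by auto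
qed

text \<open>A map with T (T - 1) (2 T - 1) = 0 is P1 + Ph / 2 for the idempotents
  P1 = T (2 T - 1) and Ph = 4 T (1 - T), and T w = w forces P1 w = w.\<close>

lemma basis_trace_pos_Peirce:
  assumes B: "finite_basis B" and T: "linear T"
    and Peirce: "\<And>v. 2 *\<^sub>R T (T (T v)) = 3 *\<^sub>R T (T v) - T v"
    and w: "T w = w" "w \<noteq> 0"
  shows "basis_trace B T > 0"
proof -
  define P1 where "P1 v = 2 *\<^sub>R T (T v) - T v" for v
  define Ph where "Ph v = 4 *\<^sub>R T v - 4 *\<^sub>R T (T v)" for v
  have lT: "T (a + b) = T a + T b" "T (c *\<^sub>R a) = c *\<^sub>R T a" "T (a - b) = T a - T b" for a b c
    using linear_add[OF T] linear_scale[OF T] linear_diff[OF T] by auto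
  have TP1: "T (P1 v) = P1 v" for v
    unfolding P1_def lT Peirce scaleR_3 by simp
  have TPh: "T (Ph v) = (1/2) *\<^sub>R Ph v" for v
  proof -
    have "T (Ph v) = 4 *\<^sub>R T (T v) - 2 *\<^sub>R (2 *\<^sub>R T (T (T v)))"
      unfolding Ph_def by (simp add: lT)
    also have "\<dots> = (1/2) *\<^sub>R Ph v"
      unfolding Peirce Ph_def by (simp add: algebra_simps flip: scaleR_add_left)
    finally show ?thesis .
  qed
  have "linear P1"
    unfolding P1_def by (rule linearI) (simp_all add: lT algebra_simps)
  moreover have "P1 (P1 v) = P1 v" for v
    unfolding P1_def[of "P1 v"] TP1 by (simp add: scaleR_2)
  ultimately have tr1: "basis_trace B P1 = real (dim (range P1))"
    by (rule basis_trace_idempotent[OF B])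
  have "linear Ph"
    unfolding Ph_def by (rule linearI) (simp_all add: lT algebra_simps)
  moreover have "Ph (Ph v) = Ph v" for v
    unfolding Ph_def[of "Ph v"] TPh lT by (simp add: scaleR_2)
  ultimately have trh: "basis_trace B Ph = real (dim (range Ph))"
    by (rule basis_trace_idempotent[OF B])
  have "T = (\<lambda>v. P1 v + (1/2) *\<^sub>R Ph v)"
    unfolding P1_def Ph_def by (rule ext) (simp add: algebra_simps scaleR_2)
  then have "basis_trace B T = basis_trace B P1 + (1/2) * basis_trace B Ph"
    by (simp add: basis_trace_add[OF B] basis_trace_scaleR[OF B])
  moreover have "P1 w \<noteq> 0"
    unfolding P1_def using w by (simp add: scaleR_2)
  then have "0 < dim (range P1)"
    by (rule dim_range_pos[OF B])
  ultimately show ?thesis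
    unfolding tr1 trh by simp
qed

section \<open>Jordan algebras and their inner derivations\<close>

locale jordan =
  fixes mult :: "'a::real_vector \<Rightarrow> 'a \<Rightarrow> 'a" (infixl "\<diamond>" 70)
  assumes add_left: "(x + y) \<diamond> z = x \<diamond> z + y \<diamond> z"
    and scaleR_left: "(c *\<^sub>R x) \<diamond> y = c *\<^sub>R (x \<diamond> y)"
    and commute: "x \<diamond> y = y \<diamond> x"
    and jordan_identity: "(x \<diamond> y) \<diamond> (x \<diamond> x) = x \<diamond> (y \<diamond> (x \<diamond> x))"

lemma jordan_algebra_imp_jordan:
  fixes mult :: "'a::real_vector \<Rightarrow> 'a \<Rightarrow> 'a"
  shows "jordan_algebra mult \<Longrightarrow> jordan mult"
  unfolding jordan_algebra_def by unfold_locales auto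

lemma formally_real_square_eq_0:
  fixes mult :: "'a::real_vector \<Rightarrow> 'a \<Rightarrow> 'a"
  assumes "formally_real mult" "mult z z = 0"
  shows "z = 0"
  using assms(1)[unfolded formally_real_def, rule_format, where n=1 and a="\<lambda>_. z" and i=0] assms(2) by simp

context jordan
begin

lemma add_right: "z \<diamond> (x + y) = z \<diamond> x + z \<diamond> y"
  by (metis add_left commute)

lemma scaleR_right: "y \<diamond> (c *\<^sub>R x) = c *\<^sub>R (y \<diamond> x)"
  by (metis scaleR_left commute)

lemma zero_left [simp]: "0 \<diamond> x = 0"
  by (metis scaleR_left scale_zero_left)

lemma zero_right [simp]: "x \<diamond> 0 = 0"
  by (metis zero_left commute)

lemma minus_left: "(- x) \<diamond> y = - (x \<diamond> y)"
  by (metis scaleR_left scaleR_minus1_left)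

lemma minus_right: "y \<diamond> (- x) = - (y \<diamond> x)"
  by (metis minus_left commute)

lemma diff_left: "(x - y) \<diamond> z = x \<diamond> z - y \<diamond> z"
  by (simp only: diff_conv_add_uminus add_left minus_left)

lemma diff_right: "z \<diamond> (x - y) = z \<diamond> x - z \<diamond> y"
  by (simp only: diff_conv_add_uminus add_right minus_right)

lemmas bilinear = add_left add_right scaleR_left scaleR_right minus_left minus_right diff_left diff_right

lemma linear_mult_left: "linear (\<lambda>v. x \<diamond> v)"
  by (rule linearI) (simp_all add: add_right scaleR_right)

lemma linear_mult_right: "linear (\<lambda>v. v \<diamond> x)"
  by (rule linearI) (simp_all add: add_left scaleR_left)

lemma sum_right: "x \<diamond> (\<Sum>i\<in>S. f i) = (\<Sum>i\<in>S. x \<diamond> f i)"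
  using linear_sum[OF linear_mult_left] by blast

lemma sum_left: "(\<Sum>i\<in>S. f i) \<diamond> x = (\<Sum>i\<in>S. f i \<diamond> x)"
  using linear_sum[OF linear_mult_right] by blast

text \<open>Polarize T a b c = (a y)(b c) - a (y (b c)): it vanishes on the diagonal by the Jordan
  identity and is symmetric in b, c.\<close>

lemma jordan_identity_linearized:
  "(a \<diamond> y) \<diamond> (b \<diamond> c) + (b \<diamond> y) \<diamond> (c \<diamond> a) + (c \<diamond> y) \<diamond> (a \<diamond> b)
   = a \<diamond> (y \<diamond> (b \<diamond> c)) + b \<diamond> (y \<diamond> (c \<diamond> a)) + c \<diamond> (y \<diamond> (a \<diamond> b))"
proof -
  define T where "T a b c = (a \<diamond> y) \<diamond> (b \<diamond> c) - a \<diamond> (y \<diamond> (b \<diamond> c))" for a b c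
  have diag: "T x x x = 0" for x
    unfolding T_def using jordan_identity[of x y] by simp
  have "T (a+b+c) (a+b+c) (a+b+c) - T (a+b) (a+b) (a+b) - T (a+c) (a+c) (a+c)
      - T (b+c) (b+c) (b+c) + T a a a + T b b b + T c c c = 2 *\<^sub>R (T a b c + T b c a + T c a b)"
    unfolding T_def by (simp add: bilinear algebra_simps scaleR_2 commute[of c a] commute[of b a] commute[of c b])
  then have "T a b c + T b c a + T c a b = 0"
    by (simp add: diag)
  then show ?thesis
    unfolding T_def by (simp add: algebra_simps)
qed

lemma mult_triple_left:
  "(y \<diamond> (c \<diamond> a)) \<diamond> b = (a \<diamond> y) \<diamond> (c \<diamond> b) + (c \<diamond> a) \<diamond> (y \<diamond> b) + (c \<diamond> y) \<diamond> (a \<diamond> b)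
     - a \<diamond> (y \<diamond> (c \<diamond> b)) - c \<diamond> (y \<diamond> (a \<diamond> b))"
proof -
  have "b \<diamond> c = c \<diamond> b" "b \<diamond> (y \<diamond> (c \<diamond> a)) = (y \<diamond> (c \<diamond> a)) \<diamond> b"
    "(b \<diamond> y) \<diamond> (c \<diamond> a) = (c \<diamond> a) \<diamond> (y \<diamond> b)"
    by (simp_all add: commute)
  with jordan_identity_linearized[of a y b c] show ?thesis
    by (simp add: algebra_simps)
qed

definition inner_der :: "'a \<Rightarrow> 'a \<Rightarrow> 'a \<Rightarrow> 'a" where
  "inner_der a c v = a \<diamond> (c \<diamond> v) - c \<diamond> (a \<diamond> v)"

lemma jordan_derivation_inner_der: "jordan_derivation mult (inner_der a c)"
  unfolding jordan_derivation_def
proof (intro conjI allI)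
  show "linear (inner_der a c)"
    unfolding inner_der_def by (rule linearI) (simp_all add: bilinear algebra_simps)
  fix y b
  have "(a \<diamond> (c \<diamond> y)) \<diamond> b = (y \<diamond> a) \<diamond> (c \<diamond> b) + (c \<diamond> y) \<diamond> (a \<diamond> b) + (c \<diamond> a) \<diamond> (y \<diamond> b)
     - y \<diamond> (a \<diamond> (c \<diamond> b)) - c \<diamond> (a \<diamond> (y \<diamond> b))"
    by (rule mult_triple_left)
  moreover have "(c \<diamond> (a \<diamond> y)) \<diamond> b = (y \<diamond> c) \<diamond> (a \<diamond> b) + (a \<diamond> y) \<diamond> (c \<diamond> b) + (a \<diamond> c) \<diamond> (y \<diamond> b)
     - y \<diamond> (c \<diamond> (a \<diamond> b)) - a \<diamond> (c \<diamond> (y \<diamond> b))"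
    by (rule mult_triple_left)
  ultimately show "inner_der a c (y \<diamond> b) = inner_der a c y \<diamond> b + y \<diamond> inner_der a c b"
    unfolding inner_der_def by (simp add: bilinear algebra_simps commute[of y a] commute[of y c] commute[of a c])
qed

lemma Peirce_identity:
  assumes "e \<diamond> e = e"
  shows "2 *\<^sub>R (e \<diamond> (e \<diamond> (e \<diamond> v))) = 3 *\<^sub>R (e \<diamond> (e \<diamond> v)) - e \<diamond> v"
  using mult_triple_left[of e e e v] assms by (simp add: scaleR_3 scaleR_2 algebra_simps)

section \<open>Power-associativity and idempotents\<close>

text \<open>The junk value jpow x 0 = 0 is deliberate: the algebra need not have a unit, and it makes
  peval ignore constant coefficients.\<close>

fun jpow :: "'a \<Rightarrow> nat \<Rightarrow> 'a" where
  "jpow x 0 = 0"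
| "jpow x (Suc 0) = x"
| "jpow x (Suc (Suc n)) = x \<diamond> jpow x (Suc n)"

lemma jpow_Suc: "0 < n \<Longrightarrow> jpow x (Suc n) = x \<diamond> jpow x n"
  by (cases n) simp_all

definition L_commute :: "'a \<Rightarrow> 'a \<Rightarrow> bool" where
  "L_commute a b \<longleftrightarrow> (\<forall>v. a \<diamond> (b \<diamond> v) = b \<diamond> (a \<diamond> v))"

lemma L_commute_square: "L_commute x (x \<diamond> x)"
  unfolding L_commute_def using jordan_identity by (metis commute)

text \<open>Expressing L (x^(n+3)) through L (x^(n+2)), L (x^(n+1)), L x and L (x^2) lets all L (x^n)
  commute with L x and L (x^2) by induction, which gives power-associativity.\<close>

lemma jpow_Suc_Suc_Suc_mult:
  "jpow x (Suc (Suc (Suc n))) \<diamond> v = 2 *\<^sub>R (jpow x (Suc (Suc n)) \<diamond> (x \<diamond> v))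
     + (x \<diamond> x) \<diamond> (jpow x (Suc n) \<diamond> v) - jpow x (Suc n) \<diamond> (x \<diamond> (x \<diamond> v))
     - x \<diamond> (x \<diamond> (jpow x (Suc n) \<diamond> v))"
  using mult_triple_left[of x x "jpow x (Suc n)" v]
  by (simp add: commute[of "jpow x (Suc n)" x] scaleR_2 del: jpow.simps(3))
    (simp add: commute[of "jpow x (Suc n)" x])

lemma L_commute_jpow: "L_commute (jpow x n) x \<and> L_commute (jpow x n) (x \<diamond> x)"
proof (induction n rule: less_induct)
  case (less n)
  consider "n = 0" | "n = Suc 0" | "n = Suc (Suc 0)" | m where "n = Suc (Suc (Suc m))"
    by (metis not0_implies_Suc)
  then show ?case
  proof cases
    case 4
    let ?x2 = "x \<diamond> x" and ?p = "jpow x (Suc m)" and ?q = "jpow x (Suc (Suc m))"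
    have IH: "L_commute ?p x" "L_commute ?p ?x2" "L_commute ?q x" "L_commute ?q ?x2"
      using less.IH[of "Suc m"] less.IH[of "Suc (Suc m)"] 4 by (simp_all del: jpow.simps)
    have "?x2 \<diamond> (x \<diamond> v) = x \<diamond> (?x2 \<diamond> v)" for v
      using L_commute_square unfolding L_commute_def by simp
    with IH show ?thesis
      unfolding 4 L_commute_def jpow_Suc_Suc_Suc_mult
      by (simp add: bilinear del: jpow.simps)
  qed (use L_commute_square in \<open>auto simp: L_commute_def commute\<close>)
qed

lemma jpow_add: "0 < i \<Longrightarrow> 0 < j \<Longrightarrow> jpow x i \<diamond> jpow x j = jpow x (i + j)"
proof (induction i)
  case (Suc i)
  show ?case
  proof (cases "i = 0")
    case False
    have "jpow x (Suc i) \<diamond> jpow x j = jpow x j \<diamond> (x \<diamond> jpow x i)"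
      using False by (simp add: jpow_Suc commute)
    also have "\<dots> = x \<diamond> (jpow x j \<diamond> jpow x i)"
      using L_commute_jpow unfolding L_commute_def by blast
    also have "\<dots> = x \<diamond> jpow x (i + j)"
      using Suc False by (simp add: commute)
    also have "\<dots> = jpow x (Suc i + j)"
      using False by (simp add: jpow_Suc)
    finally show ?thesis .
  qed (use Suc in \<open>simp add: jpow_Suc\<close>)
qed simp

lemma jpow_nonzero:
  assumes reduced: "\<And>z. z \<diamond> z = 0 \<Longrightarrow> z = 0" and x: "x \<noteq> 0" and n: "0 < n"
  shows "jpow x n \<noteq> 0"
proof
  assume "jpow x n = 0"
  then have vanish: "jpow x (n + d) = 0" for d
    by (induction d) (use n in \<open>simp_all add: jpow_Suc\<close>)
  have "jpow x (2 ^ k) \<noteq> 0" for k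
  proof (induction k)
    case (Suc k)
    have "jpow x (2 ^ Suc k) = jpow x (2 ^ k) \<diamond> jpow x (2 ^ k)"
      using jpow_add[of "2 ^ k" "2 ^ k" x] by (simp add: mult_2)
    then show ?case
      using reduced Suc.IH by metis
  qed (simp add: x)
  moreover have "2 ^ n = n + (2 ^ n - n)"
    using less_exp[of n] by simp
  ultimately show False
    using vanish[of "2 ^ n - n"] by simp
qed

definition peval :: "'a \<Rightarrow> real poly \<Rightarrow> 'a" where
  "peval x p = (\<Sum>i\<le>degree p. coeff p i *\<^sub>R jpow x i)"

lemma peval_eq_sum: "degree p \<le> n \<Longrightarrow> peval x p = (\<Sum>i\<le>n. coeff p i *\<^sub>R jpow x i)"
  unfolding peval_def by (rule sum.mono_neutral_left) (auto simp: coeff_eq_0)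

lemma peval_0 [simp]: "peval x 0 = 0"
  by (simp add: peval_def)

lemma peval_add: "peval x (p + q) = peval x p + peval x q"
proof -
  let ?n = "max (degree p) (degree q)"
  have "degree (p + q) \<le> ?n"
    by (rule degree_add_le) auto
  then show ?thesis
    by (simp add: peval_eq_sum[of _ ?n] sum.distrib scaleR_add_left)
qed

lemma peval_smult: "peval x (smult c p) = c *\<^sub>R peval x p"
  by (simp add: peval_eq_sum[of _ "degree p"] scaleR_sum_right)

lemma peval_diff: "peval x (p - q) = peval x p - peval x q"
  using peval_add[of x p "- q"] peval_smult[of x "- 1" q] by simp

lemma peval_sum: "peval x (\<Sum>k\<in>S. f k) = (\<Sum>k\<in>S. peval x (f k))"
  by (induction S rule: infinite_finite_induct) (simp_all add: peval_add)

lemma peval_monom: "peval x (monom c n) = c *\<^sub>R jpow x n"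
proof -
  have "(if n = i then c else 0) *\<^sub>R v = (if i = n then c *\<^sub>R v else 0)" for i and v :: 'a
    by auto
  then show ?thesis
    by (simp add: peval_eq_sum[of _ n] degree_monom_le coeff_monom sum.delta)
qed

lemma peval_mult:
  assumes "coeff p 0 = 0" "coeff q 0 = 0"
  shows "peval x (p * q) = peval x p \<diamond> peval x q"
proof -
  have "p * q = (\<Sum>i\<le>degree p. \<Sum>j\<le>degree q. monom (coeff p i * coeff q j) (i + j))"
    by (subst (1 2) poly_as_sum_of_monoms[symmetric]) (simp add: sum_product mult_monom)
  then have "peval x (p * q) = (\<Sum>i\<le>degree p. \<Sum>j\<le>degree q. (coeff p i * coeff q j) *\<^sub>R jpow x (i + j))"
    by (simp add: peval_sum peval_monom)
  also have "\<dots> = (\<Sum>i\<le>degree p. \<Sum>j\<le>degree q. (coeff p i * coeff q j) *\<^sub>R (jpow x i \<diamond> jpow x j))"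
  proof (intro sum.cong refl)
    fix i j
    show "(coeff p i * coeff q j) *\<^sub>R jpow x (i + j) = (coeff p i * coeff q j) *\<^sub>R (jpow x i \<diamond> jpow x j)"
      by (cases "i = 0 \<or> j = 0") (use assms in \<open>auto simp: jpow_add\<close>)
  qed
  also have "\<dots> = peval x p \<diamond> peval x q"
    unfolding peval_def sum_left unfolding sum_right by (simp add: scaleR_left scaleR_right mult.commute)
  finally show ?thesis .
qed

lemma peval_mult_eq_0:
  assumes "peval x m = 0" "coeff m 0 = 0"
  shows "peval x (m * r) = 0"
proof -
  define r' where "r' = r - [:coeff r 0:]"
  have "coeff r' 0 = 0"
    unfolding r'_def by simp
  moreover have "m * r = m * r' + smult (coeff r 0) m"
    unfolding r'_def by (simp add: algebra_simps)
  ultimately show ?thesis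
    using peval_mult[OF assms(2)] assms(1) by (simp add: peval_add peval_smult)
qed

text \<open>x, x^2, ..., x^(d+1) are dependent in dimension d (unless two of them coincide).\<close>

lemma exists_annihilating_poly:
  fixes x :: 'a and B :: "'a set"
  assumes B: "finite_basis B"
  obtains m where "m \<noteq> 0" "coeff m 0 = 0" "peval x m = 0"
proof (cases "inj_on (jpow x) {1..Suc (card B)}")
  case True
  let ?S = "jpow x ` {1..Suc (card B)}"
  have "\<not> independent ?S"
  proof
    assume indep: "independent ?S"
    have "finite B" "span B = UNIV"
      using B unfolding finite_basis_def by auto
    then have "card ?S \<le> card B"
      using real_vector.independent_span_bound[OF _ indep] by simp
    moreover have "card ?S = Suc (card B)"
      using True by (simp add: card_image)
    ultimately show False
      by simp
  qed
  then obtain u where u: "\<exists>v\<in>?S. u v \<noteq> 0" "(\<Sum>v\<in>?S. u v *\<^sub>R v) = 0"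
    using dependent_finite[of ?S] by auto
  define m where "m = (\<Sum>i\<in>{1..Suc (card B)}. monom (u (jpow x i)) i)"
  have coeff_m: "coeff m j = (if j \<in> {1..Suc (card B)} then u (jpow x j) else 0)" for j
    unfolding m_def coeff_sum coeff_monom by (simp add: sum.delta)
  obtain i where i: "i \<in> {1..Suc (card B)}" "u (jpow x i) \<noteq> 0"
    using u(1) by auto
  then have "m \<noteq> 0"
    using coeff_m[of i] by auto
  moreover have "coeff m 0 = 0"
    using coeff_m[of 0] by simp
  moreover have "peval x m = (\<Sum>i\<in>{1..Suc (card B)}. u (jpow x i) *\<^sub>R jpow x i)"
    unfolding m_def peval_sum peval_monom ..
  then have "peval x m = 0"
    using u(2) sum.reindex[OF True, of "\<lambda>v. u v *\<^sub>R v"] by simp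
  ultimately show ?thesis
    using that by blast
next
  case False
  then obtain i j where ij: "i \<noteq> j" "i \<in> {1..Suc (card B)}" "j \<in> {1..Suc (card B)}" "jpow x i = jpow x j"
    unfolding inj_on_def by blast
  define m where "m = monom (1::real) i - monom 1 j"
  have "coeff m i = 1"
    unfolding m_def using ij(1) by simp
  then have "m \<noteq> 0"
    by auto
  moreover have "coeff m 0 = 0"
    unfolding m_def using ij(2,3) by simp
  moreover have "peval x m = 0"
    unfolding m_def using ij(4) by (simp add: peval_diff peval_monom)
  ultimately show ?thesis
    using that by blast
qed

text \<open>If m = X^k g with X not dividing g, Bezout a X^k + b g = 1 makes e = a X^k an idempotent
  modulo m, and e acts as the identity on x^k.\<close>

lemma exists_idempotent:
  fixes x :: 'a and B :: "'a set"
  assumes B: "finite_basis B" and reduced: "\<And>z. z \<diamond> z = 0 \<Longrightarrow> z = 0" and x: "x \<noteq> 0"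
  obtains e where "e \<noteq> 0" "e \<diamond> e = e"
proof -
  obtain m where m: "m \<noteq> 0" "coeff m 0 = 0" "peval x m = 0"
    using exists_annihilating_poly[OF B] by blast
  define k where "k = order 0 m"
  define X where "X = [:0, 1::real:]"
  obtain g where g: "m = X ^ k * g" "\<not> X dvd g"
    using order_decomp[OF m(1), of 0] unfolding k_def X_def by auto
  have "poly m 0 = 0"
    using m(2) by (simp add: poly_0_coeff_0)
  then have k: "0 < k"
    unfolding k_def using m(1) order_root by blast
  have "prime_elem X"
    unfolding X_def by (rule prime_elem_linear_field_poly) simp
  then have "coprime X g"
    using g(2) prime_elem_imp_coprime by blast
  then have "gcd (X ^ k) g = 1"
    by simp
  then obtain a b where bez: "a * X ^ k + b * g = 1"
    using bezout_coefficients_fst_snd[of "X ^ k" g] by metis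
  define e where "e = a * X ^ k"
  have cX: "coeff (X ^ k) 0 = 0"
    unfolding X_def using k by (simp add: poly_0_coeff_0[symmetric])
  have ce: "coeff e 0 = 0"
    unfolding e_def X_def using k by (simp add: poly_0_coeff_0[symmetric] poly_mult)
  have ee: "e * e = e + m * (- (a * b))"
  proof -
    have "e * e - e = e * (e - 1)"
      by (simp add: algebra_simps)
    also have "e - 1 = - (b * g)"
      using bez unfolding e_def by (simp add: algebra_simps eq_diff_eq)
    also have "e * - (b * g) = m * (- (a * b))"
      unfolding e_def g(1) by (simp add: algebra_simps)
    finally show ?thesis
      by (simp add: algebra_simps)
  qed
  have idem: "peval x e \<diamond> peval x e = peval x e"
    unfolding peval_mult[OF ce ce, symmetric] ee peval_add peval_mult_eq_0[OF m(3,2)] by simp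
  have "X ^ k = e * X ^ k + m * b"
  proof -
    have "X ^ k = X ^ k * (a * X ^ k + b * g)"
      using bez by simp
    then show ?thesis
      unfolding e_def g(1) by (simp add: algebra_simps)
  qed
  then have "peval x (X ^ k) = peval x e \<diamond> peval x (X ^ k)"
    using peval_mult[OF ce cX] peval_mult_eq_0[OF m(3,2), of b] by (metis add.right_neutral peval_add)
  moreover have "peval x (X ^ k) = jpow x k"
    using peval_monom[of x 1 k] unfolding X_def by (simp add: monom_altdef)
  ultimately have "peval x e \<noteq> 0"
    using jpow_nonzero[OF reduced x k] by auto
  with idem that show ?thesis
    by blast
qed

section \<open>The trace form and 2-local derivations\<close>

lemma jordan_derivation_if_square:
  assumes lin: "linear \<Delta>" and sq: "\<And>a. \<Delta> (a \<diamond> a) = \<Delta> a \<diamond> a + a \<diamond> \<Delta> a"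
  shows "jordan_derivation mult \<Delta>"
  unfolding jordan_derivation_def
proof (intro conjI allI lin)
  define Q where "Q a b = \<Delta> (a \<diamond> b) - \<Delta> a \<diamond> b - a \<diamond> \<Delta> b" for a b
  have Q_add_left: "Q (a + b) c = Q a c + Q b c" for a b c
    unfolding Q_def by (simp add: add_left linear_add[OF lin] algebra_simps)
  have Q_add_right: "Q c (a + b) = Q c a + Q c b" for a b c
    unfolding Q_def by (simp add: add_right linear_add[OF lin] algebra_simps)
  have Q_commute: "Q a b = Q b a" for a b
    unfolding Q_def by (simp add: commute[of a b] commute[of "\<Delta> a" b] commute[of a "\<Delta> b"] algebra_simps)
  have Q_diag: "Q a a = 0" for a
    unfolding Q_def sq by simp
  fix a b
  have "2 *\<^sub>R Q a b = Q a a + Q b a + (Q a b + Q b b)"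
    by (simp add: Q_diag Q_commute[of b a] scaleR_2)
  also have "\<dots> = Q (a + b) (a + b)"
    by (simp only: Q_add_left Q_add_right)
  finally have "2 *\<^sub>R Q a b = 0"
    by (simp only: Q_diag)
  then have "Q a b = 0"
    by simp
  then show "\<Delta> (a \<diamond> b) = \<Delta> a \<diamond> b + a \<diamond> \<Delta> b"
    unfolding Q_def by (simp add: algebra_simps)
qed

lemma two_local_derivation_square:
  assumes "two_local_derivation mult \<Delta>"
  shows "\<Delta> (a \<diamond> a) = \<Delta> a \<diamond> a + a \<diamond> \<Delta> a"
proof -
  obtain D where "jordan_derivation mult D" "\<Delta> a = D a" "\<Delta> (a \<diamond> a) = D (a \<diamond> a)"
    using assms unfolding two_local_derivation_def by blast
  then show ?thesis
    unfolding jordan_derivation_def by simp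
qed

definition trace_mult :: "'a set \<Rightarrow> 'a \<Rightarrow> real" where
  "trace_mult B w = basis_trace B (\<lambda>v. w \<diamond> v)"

context
  fixes B :: "'a set"
  assumes B: "finite_basis B"
begin

lemma linear_trace_mult: "linear (trace_mult B)"
proof (rule linearI)
  show "trace_mult B (a + b) = trace_mult B a + trace_mult B b" for a b
    unfolding trace_mult_def add_left by (rule basis_trace_add[OF B])
  show "trace_mult B (c *\<^sub>R a) = c *\<^sub>R trace_mult B a" for c a
    unfolding trace_mult_def scaleR_left by (simp add: basis_trace_scaleR[OF B])
qed

lemma trace_mult_derivation:
  assumes "jordan_derivation mult D"
  shows "trace_mult B (D w) = 0"
proof -
  have D: "linear D" "D (w \<diamond> v) = D w \<diamond> v + w \<diamond> D v" for v
    using assms unfolding jordan_derivation_def by auto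
  have "trace_mult B (D w) = basis_trace B (\<lambda>v. D (w \<diamond> v)) - basis_trace B (\<lambda>v. w \<diamond> D v)"
    unfolding trace_mult_def D(2) by (simp add: basis_trace_diff[OF B, symmetric])
  also have "\<dots> = 0"
    using basis_trace_commute[OF B D(1) linear_mult_left] by simp
  finally show ?thesis .
qed

lemma trace_mult_assoc: "trace_mult B ((a \<diamond> b) \<diamond> c) = trace_mult B (a \<diamond> (b \<diamond> c))"
proof -
  have "(a \<diamond> b) \<diamond> c - a \<diamond> (b \<diamond> c) = inner_der c a b"
    unfolding inner_der_def by (simp add: commute[of _ c])
  then show ?thesis
    using trace_mult_derivation[OF jordan_derivation_inner_der] linear_diff[OF linear_trace_mult]
    by (metis eq_iff_diff_eq_0)
qed

lemma jordan_ideal_trace_radical: "jordan_ideal mult {u. \<forall>y. trace_mult B (u \<diamond> y) = 0}"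
  unfolding jordan_ideal_def
proof (intro conjI allI impI)
  show "subspace {u. \<forall>y. trace_mult B (u \<diamond> y) = 0}"
    unfolding subspace_def
    by (simp add: add_left scaleR_left linear_add[OF linear_trace_mult]
        linear_scale[OF linear_trace_mult] linear_0[OF linear_trace_mult])
  fix x y
  assume "y \<in> {u. \<forall>y. trace_mult B (u \<diamond> y) = 0}"
  then show "x \<diamond> y \<in> {u. \<forall>y. trace_mult B (u \<diamond> y) = 0}"
    by (simp add: commute[of x y] trace_mult_assoc)
qed

text \<open>By the Peirce identity L e has eigenvalues in {0, 1/2, 1}, and e itself is a 1-eigenvector.\<close>

lemma trace_mult_idempotent_pos:
  assumes "e \<diamond> e = e" "e \<noteq> 0"
  shows "trace_mult B e > 0"
  unfolding trace_mult_def
  using basis_trace_pos_Peirce[OF B linear_mult_left Peirce_identity] assms by blast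

lemma trace_mult_nondegenerate:
  assumes simple: "simple_jordan mult" and reduced: "\<And>z. z \<diamond> z = 0 \<Longrightarrow> z = 0"
    and u: "\<And>y. trace_mult B (u \<diamond> y) = 0"
  shows "u = 0"
proof -
  obtain x y where "x \<diamond> y \<noteq> 0"
    using simple unfolding simple_jordan_def by blast
  then have "x \<noteq> 0"
    by auto
  then obtain e where e: "e \<noteq> 0" "e \<diamond> e = e"
    using exists_idempotent[OF B reduced] by blast
  then have "trace_mult B (e \<diamond> e) \<noteq> 0"
    using trace_mult_idempotent_pos[OF e(2,1)] by simp
  then have "e \<notin> {u. \<forall>y. trace_mult B (u \<diamond> y) = 0}"
    by blast
  then have "{u. \<forall>y. trace_mult B (u \<diamond> y) = 0} = {0}"
    using simple jordan_ideal_trace_radical unfolding simple_jordan_def by blast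
  with u show ?thesis
    by blast
qed

lemma two_local_derivation_skew:
  assumes "two_local_derivation mult \<Delta>"
  shows "trace_mult B (\<Delta> a \<diamond> y) = - trace_mult B (a \<diamond> \<Delta> y)"
proof -
  obtain D where D: "jordan_derivation mult D" "\<Delta> a = D a" "\<Delta> y = D y"
    using assms unfolding two_local_derivation_def by blast
  then have "D (a \<diamond> y) = \<Delta> a \<diamond> y + a \<diamond> \<Delta> y"
    unfolding jordan_derivation_def by simp
  then show ?thesis
    using trace_mult_derivation[OF D(1), of "a \<diamond> y"] linear_add[OF linear_trace_mult] by simp
qed

lemma two_local_derivation_linear:
  assumes nondeg: "\<And>u. (\<And>y. trace_mult B (u \<diamond> y) = 0) \<Longrightarrow> u = 0"
    and Delta: "two_local_derivation mult \<Delta>"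
  shows "linear \<Delta>"
proof (rule linearI)
  note tr = linear_add[OF linear_trace_mult] linear_scale[OF linear_trace_mult]
    linear_diff[OF linear_trace_mult] two_local_derivation_skew[OF Delta]
  fix a b :: 'a and c :: real
  have "\<Delta> (a + b) - \<Delta> a - \<Delta> b = 0"
    by (rule nondeg) (simp add: diff_left add_left tr)
  then show "\<Delta> (a + b) = \<Delta> a + \<Delta> b"
    by (simp add: algebra_simps)
  have "\<Delta> (c *\<^sub>R a) - c *\<^sub>R \<Delta> a = 0"
    by (rule nondeg) (simp add: diff_left scaleR_left scaleR_right tr)
  then show "\<Delta> (c *\<^sub>R a) = c *\<^sub>R \<Delta> a"
    by simp
qed

lemma two_local_derivation_imp_derivation:
  assumes "simple_jordan mult" "\<And>z. z \<diamond> z = 0 \<Longrightarrow> z = 0" "two_local_derivation mult \<Delta>"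
  shows "jordan_derivation mult \<Delta>"
proof (rule jordan_derivation_if_square)
  show "linear \<Delta>"
    using two_local_derivation_linear[OF trace_mult_nondegenerate[OF assms(1,2)] assms(3)] .
  show "\<Delta> (a \<diamond> a) = \<Delta> a \<diamond> a + a \<diamond> \<Delta> a" for a
    using two_local_derivation_square[OF assms(3)] .
qed

end

end

theorem theorem5p4:
  fixes mult :: "'a::real_vector \<Rightarrow> 'a \<Rightarrow> 'a" and \<Delta> :: "'a \<Rightarrow> 'a"
  assumes "jordan_algebra mult"
    and "finite_dim_space TYPE('a)"
    and "formally_real mult"
    and "exceptional_jordan mult"
    and "simple_jordan mult"
    and "two_local_derivation mult \<Delta>"
  shows "jordan_derivation mult \<Delta>"
proof -
  interpret jordan mult
    using assms(1) by (rule jordan_algebra_imp_jordan)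
  obtain B :: "'a set" where B: "finite_basis B"
    using assms(2) by (rule finite_dim_space_obtain_basis)
  show ?thesis
    using two_local_derivation_imp_derivation[OF B assms(5) formally_real_square_eq_0[OF assms(3)] assms(6)] .
qed

end
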